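(* Let $\mathbb{F}$ be a field of odd characteristic that is algebraic over its prime subfield. Then the following are equivalent: (1) $\mathbb{F}=\mathbb{F}_5$; (2) $\operatorname{Aut}(\mathbb{F})\subsetneq SD(\mathbb{F})$; (4) a square root of $-1$ in $\mathbb{F}$ generates the multiplicative group $\mathbb{F}^\times$. Moreover, if $\mathbb{F}$ is finite, these are also equivalent to: (3) the map $\mathbb{F}\to\mathbb{F}$ which fixes every square in $\mathbb{F}$ and sends every non-square $w$ to $-w$ is an SD-map.
   Context: A map $f:\mathbb{F}\to\widetilde{\mathbb{F}}$ between fields is called an SD-map if for all $x\neq y$ in $\mathbb{F}$ one has $f(x)\neq f(y)$ and \[ f\left(\frac{x+y}{x-y}\right)=\frac{f(x)+f(y)}{f(x)-f(y)}. \] For a field $\mathbb{F}$, $SD(\mathbb{F})$ denotes the set of surjective SD-maps $\mathbb{F}\to\mathbb{F}$, and $\operatorname{Aut}(\mathbb{F})$ its group of field automorphisms; $\operatorname{Aut}(\mathbb{F})\subseteq SD(\mathbb{F})$ always. *)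

theory Defs
  imports "HOL-Computational_Algebra.Polynomial"
begin

definition SD_map :: "('a::field \<Rightarrow> 'b::field) \<Rightarrow> bool" where
  "SD_map f \<longleftrightarrow> (\<forall>x y. x \<noteq> y \<longrightarrow>
      f x \<noteq> f y \<and> f ((x + y) / (x - y)) = (f x + f y) / (f x - f y))"

definition SD :: "('a::field \<Rightarrow> 'a) set" where
  "SD = {f. SD_map f \<and> surj f}"

definition field_aut :: "('a::field \<Rightarrow> 'a) \<Rightarrow> bool" where
  "field_aut f \<longleftrightarrow> bij f \<and> f 1 = 1 \<and>
     (\<forall>x y. f (x + y) = f x + f y) \<and> (\<forall>x y. f (x * y) = f x * f y)"

definition Aut :: "('a::field \<Rightarrow> 'a) set" where
  "Aut = {f. field_aut f}"

text \<open>The prime subfield (in positive characteristic) is the image of the naturals.\<close>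
definition prime_subfield :: "'a::field set" where
  "prime_subfield = {x. \<exists>a b::int. b \<noteq> 0 \<and> of_int b \<noteq> (0::'a) \<and> x = of_int a / of_int b}"

definition algebraic_over_prime_subfield :: "'a::field \<Rightarrow> bool" where
  "algebraic_over_prime_subfield x \<longleftrightarrow>
     (\<exists>p. p \<noteq> 0 \<and> (\<forall>i. coeff p i \<in> prime_subfield) \<and> poly p x = 0)"

definition is_square :: "'a::field \<Rightarrow> bool" where
  "is_square w \<longleftrightarrow> (\<exists>y. w = y ^ 2)"

definition generates_units :: "'a::field \<Rightarrow> bool" where
  "generates_units g \<longleftrightarrow> (\<forall>x. x \<noteq> 0 \<longrightarrow> (\<exists>k::nat. x = g ^ k))"

end

(* An SD-map f between fields of characteristic different from 2 satisfies f 0 = 0, f 1 = 1,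
   f (- x) = - f x and f (x / y) = f x / f y, so the SD identity becomes
   f (x + y) * (f x - f y) = f (x - y) * (f x + f y).  At small integers this forces f 2 = 2 or
   (f 2)^2 = -1; at the pair (x + 1)^2, (x - 1)^2 it gives 2 f (x + 1)^2 = f 2 (f x + 1)^2 and
   2 f (x - 1)^2 = f 2 (f x - 1)^2 whenever x is nonzero and not a fourth root of unity.
   If f 2 = 2 these relations determine f (x + 1) = f x + 1, so f is additive and hence an
   automorphism.  Otherwise 4 = -1, and the relations at two consecutive such points contradict each
   other, so the field is {0, 1, -1, 2, -2}.  There every nonzero x has x^4 = 1, which makes x^3 a
   non-additive SD-map; it fixes the squares 0, 1, -1 and negates the non-squares 2, -2, and the
   square root 2 of -1 generates the units. *)

theory Submission
  imports Defs "HOL-Number_Theory.Residues"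
begin

lemma numeral_two_neq_one [simp]: "(2::'a::ring_1) \<noteq> 1"
  by (metis one_add_one add_cancel_right_right zero_neq_one)

section \<open>SD-maps between fields of characteristic not 2\<close>

text \<open>The equations \<open>e1\<close>, \<open>e2\<close>, \<open>e3\<close> are the SD relations at the pairs \<open>(2, 1)\<close>, \<open>(4, 1)\<close> and
  \<open>(5, 1)\<close> for \<open>a = f 2\<close>, \<open>b = f 3\<close> and \<open>c = f 5\<close>.\<close>

lemma eq_2_of_SD_relations:
  fixes a b c :: "'a::field"
  assumes "(2::'a) \<noteq> 0" and "a \<noteq> 0" and "a + 1 \<noteq> 0" and "a ^ 2 + 1 \<noteq> 0"
    and e1: "b * (a - 1) = a + 1"
    and e2: "c * (a ^ 2 - 1) = b * (a ^ 2 + 1)"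
    and e3: "b * (c - 1) = a * (c + 1)"
  shows "a = 2"
proof -
  have "(a + 1) * (c * (a - 1) ^ 2) = (a - 1) * (c * (a ^ 2 - 1))"
    by (simp add: power2_eq_square algebra_simps)
  also have "\<dots> = (b * (a - 1)) * (a ^ 2 + 1)"
    using e2 by simp
  also have "\<dots> = (a + 1) * (a ^ 2 + 1)"
    using e1 by simp
  finally have c1: "c * (a - 1) ^ 2 = a ^ 2 + 1"
    using assms(3) by simp
  have "c * (1 + 2 * a - a ^ 2) - (a ^ 2 + 1)
      = (a - 1) * (b * (c - 1) - a * (c + 1)) - (c - 1) * (b * (a - 1) - (a + 1))"
    by (simp add: algebra_simps power2_eq_square)
  hence c2: "c * (1 + 2 * a - a ^ 2) = a ^ 2 + 1"
    using e1 e3 by simp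
  have "c \<noteq> 0"
    using c1 assms(4) by auto
  moreover have "c * (2 * a * (2 - a)) = c * (1 + 2 * a - a ^ 2) - c * (a - 1) ^ 2"
    by (simp add: algebra_simps power2_eq_square)
  hence "c * (2 * a * (2 - a)) = 0"
    using c1 c2 by simp
  ultimately show "a = 2"
    using assms(1,2) by simp
qed

locale SD_map_char_not_2 =
  fixes f :: "'a::field \<Rightarrow> 'b::field"
  assumes SD_map: "SD_map f"
    and two_neq_zero_dom: "(2::'a) \<noteq> 0"
    and two_neq_zero_cod: "(2::'b) \<noteq> 0"
begin

lemma inj: "inj f"
  using SD_map by (auto simp: SD_map_def intro: injI)

lemma map_eq_iff [simp]: "f x = f y \<longleftrightarrow> x = y"
  using inj by (auto dest: injD)

lemma SD_eq: "x \<noteq> y \<Longrightarrow> f ((x + y) / (x - y)) = (f x + f y) / (f x - f y)"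
  using SD_map by (simp add: SD_map_def)

lemma map_zero [simp]: "f 0 = 0"
proof (rule ccontr)
  assume "f 0 \<noteq> 0"
  have "(1::'a) \<noteq> -1"
    using two_neq_zero_dom by (metis add_eq_0_iff one_add_one)
  hence "f (-1) \<noteq> f 1" by simp
  have "f 1 - f 0 \<noteq> 0" "f (-1) - f 0 \<noteq> 0"
    by simp_all
  moreover have "(f 1 + f 0) / (f 1 - f 0) = (f (-1) + f 0) / (f (-1) - f 0)"
    using SD_eq[of 1 0] SD_eq[of "-1" 0] by simp
  ultimately have "(f 1 + f 0) * (f (-1) - f 0) = (f (-1) + f 0) * (f 1 - f 0)"
    by (simp add: frac_eq_eq)
  hence "2 * f 0 * (f (-1) - f 1) = 0"
    by (simp add: algebra_simps)
  with \<open>f 0 \<noteq> 0\<close> \<open>f (-1) \<noteq> f 1\<close> show False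
    using two_neq_zero_cod by simp
qed

lemma map_eq_0_iff [simp]: "f x = 0 \<longleftrightarrow> x = 0"
  using map_eq_iff[of x 0] by simp

lemma map_one [simp]: "f 1 = 1"
  using SD_eq[of 1 0] by simp

lemma map_eq_1_iff [simp]: "f x = 1 \<longleftrightarrow> x = 1"
  using map_eq_iff[of x 1] by simp

lemma map_minus [simp]: "f (- x) = - f x"
proof (cases "x = 0")
  case False
  hence "x \<noteq> - x"
    using two_neq_zero_dom by (metis add_eq_0_iff mult_2 no_zero_divisors)
  with SD_eq[OF this] show ?thesis
    by (simp add: add_eq_0_iff)
qed simp

lemma map_eq_minus_1_iff [simp]: "f x = -1 \<longleftrightarrow> x = -1"
  using map_eq_iff[of x "-1"] by simp

text \<open>The SD identities at \<open>(x, y)\<close> and at \<open>(x / y, 1)\<close> give \<open>f (x / y)\<close> and \<open>f x / f y\<close> the same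
  image under the injective map \<open>t \<mapsto> (t + 1) / (t - 1)\<close>.\<close>

lemma map_divide [simp]: "f (x / y) = f x / f y"
proof (cases "y = 0 \<or> x = y")
  case False
  hence "y \<noteq> 0" "x \<noteq> y" "x / y \<noteq> 1" by auto
  have "(f (x / y) + 1) / (f (x / y) - 1) = f ((x / y + 1) / (x / y - 1))"
    using SD_eq[OF \<open>x / y \<noteq> 1\<close>] by simp
  also have "(x / y + 1) / (x / y - 1) = (x + y) / (x - y)"
    using \<open>y \<noteq> 0\<close> by (simp add: divide_simps)
  also have "f \<dots> = (f x + f y) / (f x - f y)"
    using SD_eq[OF \<open>x \<noteq> y\<close>] .
  also have "\<dots> = (f x / f y + 1) / (f x / f y - 1)"
    using \<open>y \<noteq> 0\<close> by (simp add: divide_simps)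
  finally have "(f (x / y) + 1) / (f (x / y) - 1) = (f x / f y + 1) / (f x / f y - 1)" .
  moreover have "f (x / y) \<noteq> 1" "f x / f y \<noteq> 1"
    using \<open>y \<noteq> 0\<close> \<open>x \<noteq> y\<close> by simp_all
  ultimately have "2 * (f (x / y) - f x / f y) = 0"
    by (simp add: frac_eq_eq algebra_simps)
  thus ?thesis
    using two_neq_zero_cod by (metis mult_eq_0_iff right_minus_eq)
qed auto

lemma map_mult [simp]: "f (x * y) = f x * f y"
  using map_divide[of x "1 / y"] by simp

lemma map_power [simp]: "f (x ^ n) = f x ^ n"
  by (induction n) simp_all

lemma sum_diff_relation: "f (x + y) * (f x - f y) = f (x - y) * (f x + f y)"
proof (cases "x = y")
  case False
  hence "f (x + y) / f (x - y) = (f x + f y) / (f x - f y)"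
    using SD_eq[of x y] by simp
  with False show ?thesis
    by (simp add: frac_eq_eq)
qed simp

lemma map_two_cases:
  assumes "(3::'a) \<noteq> 0"
  shows "f 2 = 2 \<or> f 2 ^ 2 = -1"
proof (rule disjCI)
  assume "f 2 ^ 2 \<noteq> -1"
  have f4: "f 4 = f 2 ^ 2"
    using map_power[of 2 2] by simp
  have "(2::'a) \<noteq> -1"
    using assms by (simp add: eq_neg_iff_add_eq_0)
  hence "f 2 + 1 \<noteq> 0" "f 2 ^ 2 + 1 \<noteq> 0"
    using \<open>f 2 ^ 2 \<noteq> -1\<close> by (simp_all add: add_eq_0_iff2)
  moreover have "f 2 \<noteq> 0"
    using two_neq_zero_dom by simp
  moreover have "f 3 * (f 2 - 1) = f 2 + 1"
    using sum_diff_relation[of 2 1] by simp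
  moreover have "f 5 * (f 2 ^ 2 - 1) = f 3 * (f 2 ^ 2 + 1)"
    using sum_diff_relation[of 4 1] f4 by simp
  moreover have "f 2 * (f 3 * (f 5 - 1)) = f 2 * (f 2 * (f 5 + 1))"
    using sum_diff_relation[of 5 1] f4 map_mult[of 2 3] by (simp add: power2_eq_square mult.assoc)
  hence "f 3 * (f 5 - 1) = f 2 * (f 5 + 1)"
    using two_neq_zero_dom by simp
  ultimately show "f 2 = 2"
    using eq_2_of_SD_relations[OF two_neq_zero_cod] by blast
qed

end

section \<open>Shift relations\<close>

text \<open>The points where the shift relations \<open>map_add_one_square\<close> and \<open>map_diff_one_square\<close> below
  are available: their derivation divides by \<open>f x\<close>, \<open>f x ^ 2 - 1\<close> and \<open>f x ^ 2 + 1\<close>.\<close>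

definition generic :: "'a::field \<Rightarrow> bool" where
  "generic x \<longleftrightarrow> x \<noteq> 0 \<and> x ^ 2 \<noteq> 1 \<and> x ^ 2 \<noteq> -1"

lemma generic_uminus [simp]: "generic (- x) \<longleftrightarrow> generic x"
  by (simp add: generic_def)

lemma generic_add_one_or_diff_one:
  fixes x :: "'a::field"
  assumes "(2::'a) \<noteq> 0" and "generic x"
  shows "generic (x + 1) \<or> generic (x - 1)"
proof (rule ccontr)
  assume "\<not> ?thesis"
  moreover have "x + 1 \<noteq> 0" "x - 1 \<noteq> 0"
    using \<open>generic x\<close> by (auto simp: generic_def add_eq_0_iff2)
  ultimately have "(x + 1) ^ 2 \<in> {1, -1}" "(x - 1) ^ 2 \<in> {1, -1}"
    by (auto simp: generic_def)
  moreover have "(x + 1) ^ 2 - (x - 1) ^ 2 = 2 * (2 * x)"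
    "(x + 1) ^ 2 + (x - 1) ^ 2 = 2 * (x ^ 2 + 1)"
    by (simp_all add: algebra_simps power2_eq_square)
  moreover have "2 * (2 * x) \<noteq> 0" "2 * (x ^ 2 + 1) \<noteq> 0"
    by (intro no_zero_divisors; use assms in \<open>simp add: generic_def add_eq_0_iff2\<close>)+
  ultimately show False
    by auto
qed

lemma generic_add_one_of_square_eq_minus_one:
  fixes x :: "'a::field"
  assumes "(2::'a) \<noteq> 0" and "x ^ 2 = -1"
  shows "generic (x + 1) \<or> x = 2 \<or> x = -2"
proof (rule disjCI)
  assume "\<not> (x = 2 \<or> x = -2)"
  have "x \<noteq> -1"
  proof
    assume "x = -1"
    with assms(2) have "(1::'a) = -1"
      by simp
    with assms(1) show False
      by (simp add: eq_neg_iff_add_eq_0)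
  qed
  have sq: "(x + 1) ^ 2 = 2 * x"
    using assms(2) by (simp add: algebra_simps power2_eq_square)
  have "2 * x \<noteq> e" if "e \<in> {1, -1}" for e :: 'a
  proof
    assume "2 * x = e"
    have "e ^ 2 = 1"
      using that by auto
    have "4 * x ^ 2 = (2 * x) ^ 2"
      by (simp add: power_mult_distrib)
    also have "\<dots> = 1"
      using \<open>2 * x = e\<close> \<open>e ^ 2 = 1\<close> by simp
    finally have "4 * x ^ 2 = 1" .
    hence "(5::'a) = 0"
      using assms(2) by (simp add: eq_neg_iff_add_eq_0)
    moreover have "2 * (x + 2 * e) = 5 * e"
      using \<open>2 * x = e\<close> by (simp add: algebra_simps)
    ultimately have "2 * (x + 2 * e) = 0"
      by simp
    hence "x = - 2 * e"
      using assms(1) by (metis mult_eq_0_iff eq_neg_iff_add_eq_0 mult_minus_left)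
    thus False
      using that \<open>\<not> (x = 2 \<or> x = -2)\<close> by auto
  qed
  thus "generic (x + 1)"
    using \<open>x \<noteq> -1\<close> sq by (auto simp: generic_def eq_neg_iff_add_eq_0)
qed

text \<open>For \<open>X = f x\<close>, \<open>U = f (x + 1)\<close>, \<open>V = f (x - 1)\<close>, \<open>W = f (x\<^sup>2 + 1)\<close> and \<open>a = f 2\<close> the three
  equations are the SD relations at \<open>(x, 1)\<close>, \<open>(x\<^sup>2, 1)\<close> and \<open>((x + 1)\<^sup>2, (x - 1)\<^sup>2)\<close>, the last
  divided by \<open>a\<close>.
  Eliminating \<open>U\<close> gives \<open>W (X - 1)\<^sup>2 = V\<^sup>2 (X\<^sup>2 + 1)\<close> and \<open>2 W = a (X\<^sup>2 + 1)\<close>.\<close>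

lemma square_relation_of_shift_equations:
  fixes X U V W a :: "'a::field"
  assumes "(2::'a) \<noteq> 0" and "generic X" and "V \<noteq> 0"
    and E1: "U * (X - 1) = V * (X + 1)"
    and E2: "W * (X ^ 2 - 1) = U * V * (X ^ 2 + 1)"
    and E3: "W * (U ^ 2 - V ^ 2) = a * X * (U ^ 2 + V ^ 2)"
  shows "2 * V ^ 2 = a * (X - 1) ^ 2"
proof -
  have "X + 1 \<noteq> 0" "X ^ 2 + 1 \<noteq> 0" "X \<noteq> 0"
    using \<open>generic X\<close> by (auto simp: generic_def add_eq_0_iff2)
  have "(X + 1) * (W * (X - 1) ^ 2) = (X - 1) * (W * (X ^ 2 - 1))"
    by (simp add: algebra_simps power2_eq_square)
  also have "\<dots> = (U * (X - 1)) * V * (X ^ 2 + 1)"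
    using E2 by (simp add: algebra_simps)
  also have "\<dots> = (X + 1) * (V ^ 2 * (X ^ 2 + 1))"
    using E1 by (simp add: algebra_simps power2_eq_square)
  finally have W1: "W * (X - 1) ^ 2 = V ^ 2 * (X ^ 2 + 1)"
    using \<open>X + 1 \<noteq> 0\<close> by simp
  have UV: "(U * (X - 1)) ^ 2 = (V * (X + 1)) ^ 2"
    using E1 by simp
  have "(2 * X * V ^ 2) * (2 * W) = W * ((V * (X + 1)) ^ 2 - (V * (X - 1)) ^ 2)"
    by (simp add: algebra_simps power2_eq_square)
  also have "\<dots> = (X - 1) ^ 2 * (W * (U ^ 2 - V ^ 2))"
    unfolding UV[symmetric] by (simp add: algebra_simps power2_eq_square)
  also have "\<dots> = (X - 1) ^ 2 * (a * X * (U ^ 2 + V ^ 2))"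
    using E3 by simp
  also have "\<dots> = a * X * ((V * (X + 1)) ^ 2 + (V * (X - 1)) ^ 2)"
    unfolding UV[symmetric] by (simp add: algebra_simps power2_eq_square)
  also have "\<dots> = (2 * X * V ^ 2) * (a * (X ^ 2 + 1))"
    by (simp add: algebra_simps power2_eq_square)
  finally have "(2 * X * V ^ 2) * (2 * W) = (2 * X * V ^ 2) * (a * (X ^ 2 + 1))" .
  moreover have "2 * X * V ^ 2 \<noteq> 0"
    using assms(1) \<open>X \<noteq> 0\<close> \<open>V \<noteq> 0\<close> by simp
  ultimately have W2: "2 * W = a * (X ^ 2 + 1)"
    by (metis mult_left_cancel)
  have "(X ^ 2 + 1) * (2 * V ^ 2) = 2 * (W * (X - 1) ^ 2)"
    unfolding W1 by (simp add: algebra_simps)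
  also have "\<dots> = (X ^ 2 + 1) * (a * (X - 1) ^ 2)"
    unfolding mult.assoc[symmetric] W2 by (simp add: algebra_simps)
  finally show ?thesis
    using \<open>X ^ 2 + 1 \<noteq> 0\<close> by simp
qed

context SD_map_char_not_2
begin

lemma generic_map:
  assumes "generic x"
  shows "generic (f x)"
proof -
  have "f x ^ 2 = f (x ^ 2)"
    by simp
  with assms show ?thesis
    by (simp add: generic_def del: map_power)
qed

lemma map_diff_one_square:
  assumes "generic x"
  shows "2 * f (x - 1) ^ 2 = f 2 * (f x - 1) ^ 2"
proof -
  have E1: "f (x + 1) * (f x - 1) = f (x - 1) * (f x + 1)"
    using sum_diff_relation[of x 1] by simp
  have "x ^ 2 - 1 = (x + 1) * (x - 1)"
    by (simp add: algebra_simps power2_eq_square)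
  hence E2: "f (x ^ 2 + 1) * (f x ^ 2 - 1) = f (x + 1) * f (x - 1) * (f x ^ 2 + 1)"
    using sum_diff_relation[of "x ^ 2" 1] by simp
  have "(x + 1) ^ 2 + (x - 1) ^ 2 = 2 * (x ^ 2 + 1)" "(x + 1) ^ 2 - (x - 1) ^ 2 = 2 * (2 * x)"
    by (simp_all add: algebra_simps power2_eq_square)
  with sum_diff_relation[of "(x + 1) ^ 2" "(x - 1) ^ 2"]
  have "f 2 * (f (x ^ 2 + 1) * (f (x + 1) ^ 2 - f (x - 1) ^ 2))
      = f 2 * (f 2 * f x * (f (x + 1) ^ 2 + f (x - 1) ^ 2))"
    by (simp only: mult.assoc map_mult map_power)
  hence E3: "f (x ^ 2 + 1) * (f (x + 1) ^ 2 - f (x - 1) ^ 2) = f 2 * f x * (f (x + 1) ^ 2 + f (x - 1) ^ 2)"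
    using two_neq_zero_dom by simp
  have "f (x - 1) \<noteq> 0"
    using assms by (auto simp: generic_def)
  with E1 E2 E3 show ?thesis
    using square_relation_of_shift_equations[OF two_neq_zero_cod generic_map[OF assms]] by blast
qed

lemma map_add_one_square:
  assumes "generic x"
  shows "2 * f (x + 1) ^ 2 = f 2 * (f x + 1) ^ 2"
proof -
  have "f (- x - 1) = - f (x + 1)"
    using map_minus[of "x + 1"] by simp
  thus ?thesis
    using map_diff_one_square[of "- x"] assms by (simp add: power2_eq_square algebra_simps)
qed

lemma map_add_one_of_map_diff_one:
  assumes "f (x - 1) = f x - 1" and "x \<noteq> 1"
  shows "f (x + 1) = f x + 1"
proof -
  have "f (x + 1) * (f x - 1) = (f x + 1) * (f x - 1)"
    using sum_diff_relation[of x 1] assms(1) by simp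
  with assms(2) show ?thesis
    by simp
qed

lemma map_diff_one_of_map_add_one:
  assumes "f (x + 1) = f x + 1" and "x \<noteq> -1"
  shows "f (x - 1) = f x - 1"
proof -
  have "f (x - 1) * (f x + 1) = f (x + 1) * (f x - 1)"
    using sum_diff_relation[of x 1] by simp
  also have "\<dots> = (f x - 1) * (f x + 1)"
    unfolding assms(1) by simp
  finally have "f (x - 1) * (f x + 1) = (f x - 1) * (f x + 1)" .
  moreover have "f x + 1 \<noteq> 0"
    using assms(2) by (simp add: add_eq_0_iff2)
  ultimately show ?thesis
    by (metis mult_cancel_right)
qed

lemma map_add_one_not_flipped:
  assumes "f 2 = 2" and "generic x" and "generic (x + 1)"
  shows "f (x + 1) \<noteq> - (f x + 1)"
proof
  assume flipped: "f (x + 1) = - (f x + 1)"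
  have "f x \<noteq> -1"
    using assms(2) by (auto simp: generic_def)
  have "f x ^ 2 = (f (x + 1) - 1) ^ 2"
    using map_diff_one_square[OF assms(3)] assms(1) two_neq_zero_cod by simp
  also have "\<dots> = f x ^ 2 + 2 * (2 * (f x + 1))"
    unfolding flipped by (simp add: power2_eq_square algebra_simps)
  finally have "2 * (2 * (f x + 1)) = 0"
    by simp
  moreover have "2 * (2 * (f x + 1)) \<noteq> 0"
    using two_neq_zero_cod \<open>f x \<noteq> -1\<close> by (intro no_zero_divisors) (simp_all add: add_eq_0_iff2)
  ultimately show False
    by contradiction
qed

text \<open>With \<open>f 2 = 2\<close> the shift relations determine \<open>f (x + 1)\<close> and \<open>f (x - 1)\<close> up to a common sign;
  a wrong sign contradicts the shift relation at whichever neighbour of \<open>x\<close> is generic.\<close>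

lemma map_add_one_generic:
  assumes "f 2 = 2" and "generic x"
  shows "f (x + 1) = f x + 1"
proof (rule ccontr)
  assume "f (x + 1) \<noteq> f x + 1"
  moreover have "f (x + 1) ^ 2 = (f x + 1) ^ 2"
    using map_add_one_square[OF assms(2)] assms(1) two_neq_zero_cod by simp
  ultimately have flipped: "f (x + 1) = - (f x + 1)"
    by (simp add: power2_eq_iff)
  have "f x \<noteq> -1"
    using assms(2) by (auto simp: generic_def)
  have "f (x - 1) * (f x + 1) = f (x + 1) * (f x - 1)"
    using sum_diff_relation[of x 1] by simp
  also have "\<dots> = - (f x - 1) * (f x + 1)"
    unfolding flipped by (simp add: algebra_simps)
  finally have "f (x - 1) = - (f x - 1)"
    using \<open>f x \<noteq> -1\<close> by (simp add: add_eq_0_iff2)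
  hence "f (- x + 1) = - (f (- x) + 1)"
    using map_minus[of "x - 1"] by simp
  moreover have "generic (x + 1) \<or> generic (- x + 1)"
    using generic_add_one_or_diff_one[OF two_neq_zero_dom assms(2)] generic_uminus[of "x - 1"] by simp
  ultimately show False
    using map_add_one_not_flipped[OF assms(1)] assms(2) flipped by (metis generic_uminus)
qed

lemma map_add_one:
  assumes "f 2 = 2"
  shows "f (x + 1) = f x + 1"
proof (cases "generic x")
  case True
  thus ?thesis
    using map_add_one_generic[OF assms] by blast
next
  case False
  consider "x \<in> {0, 1, -1, -2}" | "x = 2" | "x ^ 2 = -1" "x \<noteq> 2" "x \<noteq> -2"
    using False by (auto simp: generic_def power2_eq_1_iff)
  thus ?thesis
  proof cases
    case 1
    thus ?thesis
      using assms by auto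
  next
    case 2
    thus ?thesis
      using map_add_one_of_map_diff_one[of 2] assms by simp
  next
    case 3
    hence "generic (x + 1)"
      using generic_add_one_of_square_eq_minus_one[OF two_neq_zero_dom] by blast
    hence "f (x + 1 + 1) = f (x + 1) + 1"
      by (rule map_add_one_generic[OF assms])
    moreover have "x + 1 \<noteq> -1"
      using 3(3) by (simp add: eq_neg_iff_add_eq_0 add.assoc)
    ultimately show ?thesis
      using map_diff_one_of_map_add_one[of "x + 1"] by simp
  qed
qed

lemma map_add:
  assumes "f 2 = 2"
  shows "f (x + y) = f x + f y"
proof (cases "y = 0")
  case False
  hence "x + y = (x / y + 1) * y"
    by (simp add: field_simps)
  hence "f (x + y) = (f x / f y + 1) * f y"
    using map_add_one[OF assms] by simp
  also have "\<dots> = f x + f y"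
    using False by (simp add: distrib_right)
  finally show ?thesis .
qed simp

end

section \<open>The field with five elements\<close>

lemma sqrt_minus_one_distinct:
  fixes i :: "'a::field"
  assumes "(2::'a) \<noteq> 0" and "i ^ 2 = -1"
  shows "i \<noteq> 0" "i \<noteq> 1" "i \<noteq> -1" "- i \<noteq> 1" "- i \<noteq> -1" "i \<noteq> - i"
proof -
  have "(1::'a) \<noteq> -1"
    using assms(1) by (simp add: eq_neg_iff_add_eq_0)
  thus "i \<noteq> 0" "i \<noteq> 1" "i \<noteq> -1" "- i \<noteq> 1" "- i \<noteq> -1"
    using assms(2) by (auto simp: minus_equation_iff[of i])
  thus "i \<noteq> - i"
    using assms(1) by (simp add: eq_neg_iff_add_eq_0 flip: mult_2)
qed

lemma cube_sqrt_minus_one: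
  fixes i :: "'a::field"
  assumes "i ^ 2 = -1"
  shows "i ^ 3 = - i"
proof -
  have "i * i = -1"
    using assms by (simp add: power2_eq_square)
  thus ?thesis
    by (simp add: power3_eq_cube)
qed

lemma card_zero_one_minus_one_sqrt:
  fixes i :: "'a::field"
  assumes "(2::'a) \<noteq> 0" and "i ^ 2 = -1"
  shows "card {0, 1, -1, i, -i} = 5"
proof -
  have "(1::'a) \<noteq> -1"
    using assms(1) by (simp add: eq_neg_iff_add_eq_0)
  with sqrt_minus_one_distinct[OF assms] show ?thesis
    by simp
qed

lemma CHAR_eq_5_of_card:
  assumes "card (UNIV :: 'a::field set) = 5"
  shows "CHAR('a) = 5"
proof -
  have "CHAR('a) dvd 5"
    using CHAR_dvd_CARD[where 'a = 'a] assms by simp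
  moreover have "prime (5::nat)"
    by simp
  ultimately show ?thesis
    by (auto simp: prime_nat_iff)
qed

lemma five_eq_zero_of_card:
  assumes "card (UNIV :: 'a::field set) = 5"
  shows "(5::'a) = 0"
  using of_nat_CHAR[where 'a = 'a] CHAR_eq_5_of_card[OF assms] by simp

lemma card_UNIV_eq_5_iff:
  assumes "(2::'a::field) \<noteq> 0"
  shows "card (UNIV :: 'a set) = 5 \<longleftrightarrow> (\<exists>i::'a. i ^ 2 = -1 \<and> UNIV = {0, 1, -1, i, -i})"
proof
  assume card: "card (UNIV :: 'a set) = 5"
  hence "(2::'a) ^ 2 = -1"
    using five_eq_zero_of_card by (simp add: eq_neg_iff_add_eq_0)
  moreover have "finite (UNIV :: 'a set)"
    using card card.infinite by fastforce
  ultimately have "{0, 1, -1, 2, -2 :: 'a} = UNIV"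
    using card_zero_one_minus_one_sqrt[OF assms] card by (intro card_subset_eq) simp_all
  with \<open>(2::'a) ^ 2 = -1\<close> show "\<exists>i::'a. i ^ 2 = -1 \<and> UNIV = {0, 1, -1, i, -i}"
    by blast
next
  assume "\<exists>i::'a. i ^ 2 = -1 \<and> UNIV = {0, 1, -1, i, -i}"
  thus "card (UNIV :: 'a set) = 5"
    using card_zero_one_minus_one_sqrt[OF assms] by metis
qed

lemma generic_of_five_eq_zero:
  fixes x :: "'a::field"
  assumes "(5::'a) = 0" and "x \<notin> {0, 1, -1, 2, -2}"
  shows "generic x"
proof -
  have "(2::'a) ^ 2 = -1"
    using assms(1) by (simp add: eq_neg_iff_add_eq_0)
  have "x ^ 2 \<noteq> -1"
  proof
    assume "x ^ 2 = -1"
    hence "x ^ 2 = 2 ^ 2"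
      using \<open>(2::'a) ^ 2 = -1\<close> by (simp only:)
    hence "x = 2 \<or> x = -2"
      by (simp only: power2_eq_iff)
    with assms(2) show False
      by auto
  qed
  with assms(2) show ?thesis
    by (auto simp: generic_def power2_eq_1_iff)
qed

text \<open>By \<open>card_UNIV_eq_5_iff\<close>, the hypotheses \<open>i ^ 2 = -1\<close> and \<open>UNIV = {0, 1, -1, i, -i}\<close> below say
  that the field has five elements.\<close>

lemma fourth_power_eq_one:
  fixes i x :: "'a::field"
  assumes "i ^ 2 = -1" and "UNIV = {0, 1, -1, i, -i}" and "x \<noteq> 0"
  shows "x ^ 4 = 1"
proof -
  have "i ^ 4 = (i ^ 2) ^ 2"
    by (simp flip: power_mult)
  hence "i ^ 4 = 1"
    using assms(1) by simp
  moreover have "x \<in> {0, 1, -1, i, -i}"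
    using assms(2) by blast
  ultimately show ?thesis
    using assms(3) by auto
qed

lemma is_square_iff:
  fixes i w :: "'a::field"
  assumes "(2::'a) \<noteq> 0" and "i ^ 2 = -1" and "UNIV = {0, 1, -1, i, -i}"
  shows "is_square w \<longleftrightarrow> w \<in> {0, 1, -1}"
proof
  assume "is_square w"
  then obtain y where "w = y ^ 2"
    by (auto simp: is_square_def)
  moreover have "y \<in> {0, 1, -1, i, -i}"
    using assms(3) by blast
  ultimately show "w \<in> {0, 1, -1}"
    using assms(2) by auto
next
  assume "w \<in> {0, 1, -1}"
  thus "is_square w"
    unfolding is_square_def using assms(2) by (metis insert_iff empty_iff power_one zero_power2)
qed

lemma square_sign_map_eq_cube:
  fixes i :: "'a::field"
  assumes "(2::'a) \<noteq> 0" and "i ^ 2 = -1" and "UNIV = {0, 1, -1, i, -i}"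
  shows "(\<lambda>w::'a. if is_square w then w else - w) = (\<lambda>x. x ^ 3)"
proof
  fix w :: 'a
  show "(if is_square w then w else - w) = w ^ 3"
  proof (cases "w \<in> {0, 1, -1}")
    case True
    thus ?thesis
      using is_square_iff[OF assms] by auto
  next
    case False
    moreover have "w \<in> {0, 1, -1, i, -i}"
      using assms(3) by blast
    ultimately have "w = i \<or> w = - i"
      by blast
    with False show ?thesis
      using is_square_iff[OF assms, of w] cube_sqrt_minus_one[OF assms(2)] by auto
  qed
qed

lemma powers_of_sqrt_minus_one:
  fixes i :: "'a::field"
  assumes "i ^ 2 = -1"
  shows "i ^ k \<in> {1, i, -1, -i}"
proof (induction k)
  case (Suc k)
  have "i * i = -1"
    using assms by (simp add: power2_eq_square)
  with Suc show ?case
    by auto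
qed simp

lemma generates_units_iff:
  fixes i :: "'a::field"
  assumes "i ^ 2 = -1"
  shows "generates_units i \<longleftrightarrow> UNIV = {0, 1, -1, i, -i}"
proof
  assume "generates_units i"
  hence "x \<in> {0, 1, -1, i, -i}" for x
    using powers_of_sqrt_minus_one[OF assms] by (cases "x = 0") (auto simp: generates_units_def)
  thus "UNIV = {0, 1, -1, i, -i}"
    by blast
next
  assume UNIV: "UNIV = {0, 1, -1, i, -i}"
  have "x \<in> {i ^ 0, i ^ 2, i ^ 1, i ^ 3}" if "x \<noteq> 0" for x
  proof -
    have "x \<in> {1, -1, i, -i}"
      using that UNIV by blast
    thus ?thesis
      using assms cube_sqrt_minus_one[OF assms] by simp
  qed
  thus "generates_units i"
    unfolding generates_units_def by blast
qed

lemma SD_map_cube: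
  assumes "\<And>x::'a::field. x \<noteq> 0 \<Longrightarrow> x ^ 4 = 1"
  shows "SD_map (\<lambda>x::'a. x ^ 3)"
  unfolding SD_map_def
proof (intro allI impI conjI)
  fix x y :: 'a
  assume "x \<noteq> y"
  have "x * y * (x ^ 4 - y ^ 4) = 0"
    using assms by (cases "x = 0 \<or> y = 0") auto
  show "x ^ 3 \<noteq> y ^ 3"
  proof
    assume "x ^ 3 = y ^ 3"
    with \<open>x \<noteq> y\<close> have "x \<noteq> 0" "y \<noteq> 0"
      by auto
    have "x * x ^ 3 = y * y ^ 3"
      using assms[OF \<open>x \<noteq> 0\<close>] assms[OF \<open>y \<noteq> 0\<close>] by (simp flip: power_Suc)
    with \<open>x ^ 3 = y ^ 3\<close> \<open>y \<noteq> 0\<close> \<open>x \<noteq> y\<close> show False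
      by simp
  qed
  have "(x + y) ^ 3 * (x ^ 3 - y ^ 3) - (x ^ 3 + y ^ 3) * (x - y) ^ 3 = 6 * (x * y * (x ^ 4 - y ^ 4))"
    by (simp add: algebra_simps power2_eq_square power3_eq_cube power4_eq_xxxx)
  also have "\<dots> = 0"
    by (simp only: \<open>x * y * (x ^ 4 - y ^ 4) = 0\<close> mult_zero_right)
  finally have "(x + y) ^ 3 * (x ^ 3 - y ^ 3) = (x ^ 3 + y ^ 3) * (x - y) ^ 3"
    by simp
  with \<open>x ^ 3 \<noteq> y ^ 3\<close> \<open>x \<noteq> y\<close>
  show "((x + y) / (x - y)) ^ 3 = (x ^ 3 + y ^ 3) / (x ^ 3 - y ^ 3)"
    by (simp add: power_divide frac_eq_eq)
qed

lemma surj_cube: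
  assumes "\<And>x::'a::field. x \<noteq> 0 \<Longrightarrow> x ^ 4 = 1"
  shows "surj (\<lambda>x::'a. x ^ 3)"
proof -
  have "(y ^ 3) ^ 3 = y" for y :: 'a
  proof (cases "y = 0")
    case False
    have "(y ^ 3) ^ 3 = y * (y ^ 4) ^ 2"
      by (simp flip: power_mult power_Suc)
    with assms[OF False] show ?thesis
      by simp
  qed simp
  thus ?thesis
    by (metis surjI)
qed

lemma cube_not_field_aut:
  assumes "(6::'a::field) \<noteq> 0"
  shows "\<not> field_aut (\<lambda>x::'a. x ^ 3)"
proof
  assume "field_aut (\<lambda>x::'a. x ^ 3)"
  hence "\<forall>x y::'a. (x + y) ^ 3 = x ^ 3 + y ^ 3"
    by (simp add: field_aut_def)
  hence "(1 + 1 :: 'a) ^ 3 = 1 ^ 3 + 1 ^ 3"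
    by blast
  hence "(8::'a) = 2"
    by simp
  moreover have "(6::'a) = 8 - 2"
    by simp
  ultimately have "(6::'a) = 0"
    by simp
  with assms show False ..
qed

section \<open>SD-maps that are not automorphisms\<close>

context SD_map_char_not_2
begin

lemma not_generic_add_one:
  fixes x :: 'a
  assumes "f 2 = -2" and "(5::'b) = 0" and "generic x"
  shows "\<not> generic (x + 1)"
proof
  assume "generic (x + 1)"
  define X Y where "X = f x" and "Y = f (x + 1)"
  have "2 * (Y ^ 2 + (X + 1) ^ 2) = 0"
    using map_add_one_square[OF assms(3)] assms(1) by (simp add: X_def Y_def algebra_simps)
  hence EY: "Y ^ 2 + (X + 1) ^ 2 = 0"
    using two_neq_zero_cod by (metis mult_eq_0_iff)
  have "2 * (X ^ 2 + (Y - 1) ^ 2) = 0"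
    using map_diff_one_square[OF \<open>generic (x + 1)\<close>] assms(1) by (simp add: X_def Y_def algebra_simps)
  hence EX: "X ^ 2 + (Y - 1) ^ 2 = 0"
    using two_neq_zero_cod by (metis mult_eq_0_iff)
  have "2 * (X + Y) = (Y ^ 2 + (X + 1) ^ 2) - (X ^ 2 + (Y - 1) ^ 2)"
    by (simp add: algebra_simps power2_eq_square)
  also have "\<dots> = 0"
    using EX EY by simp
  finally have "X + Y = 0"
    using two_neq_zero_cod by (metis mult_eq_0_iff)
  hence "Y = - X"
    by (metis add.commute eq_neg_iff_add_eq_0)
  have "2 * ((X + 2) * (X - 1)) = (Y ^ 2 + (X + 1) ^ 2) - 5"
    unfolding \<open>Y = - X\<close> by (simp add: algebra_simps power2_eq_square)
  also have "\<dots> = 0"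
    using EY assms(2) by simp
  finally have "(X + 2) * (X - 1) = 0"
    using two_neq_zero_cod by (metis mult_eq_0_iff)
  hence "X = -2 \<or> X = 1"
    by (simp add: eq_neg_iff_add_eq_0)
  moreover have "(-2::'b) ^ 2 = -1"
    using assms(2) by (simp add: eq_neg_iff_add_eq_0)
  ultimately show False
    using generic_map[OF assms(3)] by (auto simp: X_def generic_def)
qed

end

lemma add_one_notin_of_five_eq_zero:
  fixes x :: "'a::field"
  assumes "(5::'a) = 0" and "x \<notin> {0, 1, -1, 2, -2}"
  shows "x + 1 \<notin> {0, 1, -1, 2, -2}"
proof
  assume "x + 1 \<in> {0, 1, -1, 2, -2}"
  hence "x \<in> {-1, 0, -2, 1, -3}"
    by (auto simp flip: eq_diff_eq)
  moreover have "(-3::'a) = 2"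
    using assms(1) by (simp add: eq_neg_iff_add_eq_0)
  ultimately show False
    using assms(2) by blast
qed

lemma SD_map_two_neq_two:
  fixes f :: "'a::field \<Rightarrow> 'a"
  assumes "SD_map f" and "(2::'a) \<noteq> 0" and "f 2 \<noteq> 2"
  shows "(5::'a) = 0" and "f 2 = -2"
proof -
  interpret SD_map_char_not_2 f
    using assms(1,2) by unfold_locales
  have "(3::'a) \<noteq> 0"
  proof
    assume "(3::'a) = 0"
    hence "(2::'a) = -1"
      by (simp add: eq_neg_iff_add_eq_0)
    hence "f 2 = f (-1)" "f (-1) = 2"
      by (simp_all only: map_minus map_one)
    with assms(3) show False
      by simp
  qed
  hence "f 2 ^ 2 = -1"
    using map_two_cases assms(3) by blast
  hence "f 4 = f (-1)"
    using map_power[of 2 2] by simp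
  hence "(4::'a) = -1"
    by (simp only: map_eq_iff)
  thus five: "(5::'a) = 0"
    by (simp add: eq_neg_iff_add_eq_0)
  have "(f 2 - 2) * (f 2 + 2) = f 2 ^ 2 - 4"
    by (simp add: algebra_simps power2_eq_square)
  also have "\<dots> = - 5"
    using \<open>f 2 ^ 2 = -1\<close> by simp
  also have "\<dots> = 0"
    using five by simp
  finally show "f 2 = -2"
    using assms(3) by (simp add: eq_neg_iff_add_eq_0)
qed

lemma SD_map_additive_or_card_5:
  fixes f :: "'a::field \<Rightarrow> 'a"
  assumes "SD_map f" and "(2::'a) \<noteq> 0"
  shows "(\<forall>x y. f (x + y) = f x + f y) \<or> card (UNIV :: 'a set) = 5"
proof (cases "f 2 = 2")
  case True
  interpret SD_map_char_not_2 f
    using assms by unfold_locales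
  from True show ?thesis
    using map_add by blast
next
  case False
  interpret SD_map_char_not_2 f
    using assms by unfold_locales
  note five = SD_map_two_neq_two(1)[OF assms False]
  have "x \<in> {0, 1, -1, 2, -2}" for x :: 'a
    using not_generic_add_one[OF SD_map_two_neq_two(2)[OF assms False] five]
      generic_of_five_eq_zero[OF five] add_one_notin_of_five_eq_zero[OF five]
    by blast
  moreover have "(2::'a) ^ 2 = -1"
    using five by (simp add: eq_neg_iff_add_eq_0)
  ultimately have "card (UNIV :: 'a set) = 5"
    using card_UNIV_eq_5_iff[OF assms(2)] by blast
  thus ?thesis ..
qed

lemma Aut_subset_SD: "Aut \<subseteq> SD"
proof
  fix f :: "'a \<Rightarrow> 'a"
  assume "f \<in> Aut"
  hence "bij f" and one: "f 1 = 1"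
    and add: "\<And>x y. f (x + y) = f x + f y" and mult: "\<And>x y. f (x * y) = f x * f y"
    by (auto simp: Aut_def field_aut_def)
  have zero: "f 0 = 0"
    using add[of 0 0] by simp
  have diff: "f (x - y) = f x - f y" for x y
    using add[of "x - y" y] by (simp add: eq_diff_eq)
  have "f (inverse y) = inverse (f y)" for y
  proof (cases "y = 0")
    case False
    hence "f y * f (inverse y) = 1"
      using mult[of y "inverse y"] one by simp
    thus ?thesis
      by (metis inverse_unique)
  qed (simp add: zero)
  hence divide: "f (x / y) = f x / f y" for x y
    using mult[of x "inverse y"] by (simp add: divide_inverse)
  have "inj f"
    using \<open>bij f\<close> bij_is_inj by blast
  thus "f \<in> SD"
    using \<open>bij f\<close> by (auto simp: SD_def SD_map_def divide add diff inj_eq bij_is_surj)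
qed

lemma field_aut_of_SD_additive:
  fixes f :: "'a::field \<Rightarrow> 'a"
  assumes "f \<in> SD" and "(2::'a) \<noteq> 0" and "\<forall>x y. f (x + y) = f x + f y"
  shows "f \<in> Aut"
proof -
  interpret SD_map_char_not_2 f
    using assms(1,2) by unfold_locales (simp_all add: SD_def)
  have "bij f"
    using inj assms(1) by (simp add: SD_def bij_def)
  with assms(3) show ?thesis
    by (simp add: Aut_def field_aut_def)
qed

lemma exists_not_square:
  assumes "finite (UNIV :: 'a::field set)" and "(2::'a) \<noteq> 0"
  shows "\<exists>t::'a. \<not> is_square t"
proof (rule ccontr)
  assume "\<not> ?thesis"
  hence "surj (\<lambda>y::'a. y ^ 2)"
    by (auto simp: is_square_def surj_def)
  hence "inj (\<lambda>y::'a. y ^ 2)"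
    using assms(1) finite_UNIV_surj_inj by blast
  hence "(1::'a) = -1"
    by (metis (mono_tags, lifting) injD power2_minus)
  with assms(2) show False
    by (simp add: eq_neg_iff_add_eq_0)
qed

lemma square_sign_map_not_additive:
  fixes t :: "'a::field"
  assumes "(2::'a) \<noteq> 0" and "\<not> is_square t"
  defines "g \<equiv> \<lambda>w::'a. if is_square w then w else - w"
  shows "\<not> (\<forall>x y. g (x + y) = g x + g y)"
proof
  assume "\<forall>x y. g (x + y) = g x + g y"
  hence "g (t + 1) = g t + g 1"
    by blast
  moreover have "is_square (1::'a)"
    unfolding is_square_def by (metis power_one)
  ultimately have "g (t + 1) = - t + 1"
    using assms(2) by (simp add: g_def)
  moreover have "t \<noteq> 0"
    using assms(2) by (auto simp: is_square_def)
  ultimately show False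
    using assms(1) by (auto simp: g_def split: if_splits)
qed

lemma two_neq_zero_of_odd_CHAR:
  assumes "odd CHAR('a::field)"
  shows "(2::'a) \<noteq> 0"
proof
  assume "(2::'a) = 0"
  hence "CHAR('a) dvd 2"
    using of_nat_eq_0_iff_char_dvd[of 2, where 'a = 'a] by simp
  have "CHAR('a) \<noteq> 0"
  proof
    assume "CHAR('a) = 0"
    with \<open>CHAR('a) dvd 2\<close> show False
      by simp
  qed
  moreover have "CHAR('a) \<le> 2"
    using \<open>CHAR('a) dvd 2\<close> by (rule dvd_imp_le) simp
  ultimately have "CHAR('a) = 1"
    using assms by presburger
  thus False
    by simp
qed

lemma card_eq_5_iff_Aut_psubset_SD:
  assumes "(2::'a::field) \<noteq> 0"
  shows "card (UNIV :: 'a set) = 5 \<longleftrightarrow> (Aut :: ('a \<Rightarrow> 'a) set) \<subset> SD"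
proof
  assume card: "card (UNIV :: 'a set) = 5"
  then obtain i :: 'a where "i ^ 2 = -1" "UNIV = {0, 1, -1, i, -i}"
    using card_UNIV_eq_5_iff[OF assms] by blast
  hence fourth: "\<And>x::'a. x \<noteq> 0 \<Longrightarrow> x ^ 4 = 1"
    by (rule fourth_power_eq_one)
  have "(6::'a) = 5 + 1"
    by simp
  also have "\<dots> = 1"
    by (simp add: five_eq_zero_of_card[OF card])
  finally have "(6::'a) \<noteq> 0"
    by simp
  hence "(\<lambda>x::'a. x ^ 3) \<in> SD - Aut"
    using SD_map_cube[OF fourth] surj_cube[OF fourth] cube_not_field_aut by (simp add: SD_def Aut_def)
  with Aut_subset_SD show "(Aut :: ('a \<Rightarrow> 'a) set) \<subset> SD"
    by blast
next
  assume "(Aut :: ('a \<Rightarrow> 'a) set) \<subset> SD"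
  then obtain f :: "'a \<Rightarrow> 'a" where "f \<in> SD" "f \<notin> Aut"
    by blast
  hence "SD_map f"
    by (simp add: SD_def)
  from SD_map_additive_or_card_5[OF this assms] show "card (UNIV :: 'a set) = 5"
  proof
    assume "\<forall>x y. f (x + y) = f x + f y"
    with \<open>f \<in> SD\<close> assms have "f \<in> Aut"
      by (rule field_aut_of_SD_additive)
    with \<open>f \<notin> Aut\<close> show ?thesis ..
  qed
qed

lemma card_eq_5_iff_generated_by_sqrt_minus_one:
  assumes "(2::'a::field) \<noteq> 0"
  shows "card (UNIV :: 'a set) = 5 \<longleftrightarrow> (\<exists>i::'a. i ^ 2 = -1 \<and> generates_units i)"
  unfolding card_UNIV_eq_5_iff[OF assms] by (meson generates_units_iff)

lemma card_eq_5_iff_SD_map_square_sign_map: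
  assumes "finite (UNIV :: 'a::field set)" and "(2::'a) \<noteq> 0"
  shows "card (UNIV :: 'a set) = 5 \<longleftrightarrow> SD_map (\<lambda>w::'a. if is_square w then w else - w)"
proof
  assume "card (UNIV :: 'a set) = 5"
  then obtain i :: 'a where i: "i ^ 2 = -1" "UNIV = {0, 1, -1, i, -i}"
    using card_UNIV_eq_5_iff[OF assms(2)] by blast
  have "SD_map (\<lambda>x::'a. x ^ 3)"
    by (rule SD_map_cube) (rule fourth_power_eq_one[OF i])
  thus "SD_map (\<lambda>w::'a. if is_square w then w else - w)"
    by (simp only: square_sign_map_eq_cube[OF assms(2) i])
next
  assume "SD_map (\<lambda>w::'a. if is_square w then w else - w)"
  from SD_map_additive_or_card_5[OF this assms(2)] show "card (UNIV :: 'a set) = 5"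
  proof
    assume additive: "\<forall>x y :: 'a. (if is_square (x + y) then x + y else - (x + y))
      = (if is_square x then x else - x) + (if is_square y then y else - y)"
    obtain t :: 'a where "\<not> is_square t"
      using exists_not_square[OF assms] by blast
    from square_sign_map_not_additive[OF assms(2) this] additive show ?thesis
      by (rule notE)
  qed
qed

theorem corollary4p1:
  assumes odd_char: "odd CHAR('a::field)"
    and alg: "\<forall>x::'a. algebraic_over_prime_subfield x"
  shows "(card (UNIV :: 'a set) = 5 \<longleftrightarrow> (Aut :: ('a \<Rightarrow> 'a) set) \<subset> SD)
       \<and> (card (UNIV :: 'a set) = 5 \<longleftrightarrow> (\<exists>i::'a. i ^ 2 = -1 \<and> generates_units i))
       \<and> (finite (UNIV :: 'a set) \<longrightarrow>
            (card (UNIV :: 'a set) = 5 \<longleftrightarrow> SD_map (\<lambda>w::'a. if is_square w then w else - w)))"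
  using two_neq_zero_of_odd_CHAR[OF odd_char] card_eq_5_iff_Aut_psubset_SD
    card_eq_5_iff_generated_by_sqrt_minus_one card_eq_5_iff_SD_map_square_sign_map
  by blast

end
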